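(* Let $A\in\mathbb{C}^{n\times n}$ and let $\lambda$ be an eigenvalue of $A$ of algebraic multiplicity $m$ whose nonzero Weyr characteristic is $m_1\ge m_2\ge\cdots\ge m_k>0$. Set $\mu_0=0$, $\mu_j=m_1+\cdots+m_j$ for $j=1,\dots,k$, and $$\Phi_\lambda=\{(i,j)\;:\;\mu_{l-1}<i\le\mu_l,\ i<j\le\mu_l,\ l=1,\dots,k\}.$$ Then for almost all $\mathbf{b}_1,\dots,\mathbf{b}_m\in\mathbb{C}^n$ there exist a matrix $U=[\mathbf{u}_1,\dots,\mathbf{u}_m]\in\mathbb{C}^{n\times m}$ with $U^{\mathsf H}U=I_m$ and a staircase nilpotent matrix $S\in\mathbb{C}^{m\times m}$ (with respect to $m_1,\dots,m_k$) such that $$AU-U(\lambda I_m+S)=O\quad\text{and}\quad \mathbf{u}_i^{\mathsf H}\mathbf{b}_j=0\ \text{ for every }(i,j)\in\Phi_\lambda.$$ Moreover, if $\hat U=[\hat{\mathbf u}_1,\dots,\hat{\mathbf u}_m]\in\mathbb{C}^{n\times m}$ with $\hat U^{\mathsf H}\hat U=I_m$ and a staircase nilpotent matrix $\hat S$ also satisfy these two conditions in place of $U$ and $S$, then $\hat S=\hat U^{\mathsf H}(A-\lambda I)\hat U$, where $\hat U=UD$ for a diagonal matrix $D=\mathrm{diag}(\alpha_1,\dots,\alpha_m)$ with $|\alpha_1|=\cdots=|\alpha_m|=1$.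
   Context: The Weyr characteristic of $A$ at $\lambda$ is the sequence $m_j=\dim\ker(A-\lambda I)^j-\dim\ker(A-\lambda I)^{j-1}$, $j=1,2,\dots$; it is nonincreasing, its nonzero part is $m_1\ge\cdots\ge m_k$, and $m_1+\cdots+m_k=m$. A staircase nilpotent matrix with respect to $m_1,\dots,m_k$ is a matrix $S\in\mathbb{C}^{m\times m}$ which, partitioned into blocks $S_{ij}\in\mathbb{C}^{m_i\times m_j}$ ($1\le i,j\le k$), has $S_{ij}=O$ whenever $i\ge j$ (zero diagonal blocks and zero blocks below the block diagonal). $X^{\mathsf H}$ denotes the conjugate transpose. "For almost all" means for all vectors outside a subset of Lebesgue measure zero. *)

theory Defs
  imports "HOL-Analysis.Analysis"
    "Jordan_Normal_Form.Jordan_Normal_Form"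
    "Jordan_Normal_Form.Schur_Decomposition"
    "Jordan_Normal_Form.Matrix_Kernel"
begin

definition weyr :: "complex mat \<Rightarrow> complex \<Rightarrow> nat \<Rightarrow> nat" where
  "weyr A lam j =
     kernel_dim ((A - lam \<cdot>\<^sub>m 1\<^sub>m (dim_row A)) ^\<^sub>m j)
   - kernel_dim ((A - lam \<cdot>\<^sub>m 1\<^sub>m (dim_row A)) ^\<^sub>m (j - 1))"

definition weyr_mu :: "complex mat \<Rightarrow> complex \<Rightarrow> nat \<Rightarrow> nat" where
  "weyr_mu A lam l = (\<Sum>j=1..l. weyr A lam j)"

text \<open>Block index (1-based) of the 0-based row/column index p:
  the unique l \<ge> 1 with mu_(l-1) \<le> p < mu_l.\<close>
definition weyr_block :: "complex mat \<Rightarrow> complex \<Rightarrow> nat \<Rightarrow> nat" where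
  "weyr_block A lam p = (LEAST l. p < weyr_mu A lam l)"

definition staircase :: "complex mat \<Rightarrow> complex \<Rightarrow> nat \<Rightarrow> complex mat \<Rightarrow> bool" where
  "staircase A lam m S \<longleftrightarrow> S \<in> carrier_mat m m \<and>
     (\<forall>p<m. \<forall>q<m. weyr_block A lam p \<ge> weyr_block A lam q \<longrightarrow> S $$ (p,q) = 0)"

text \<open>The index set Phi_lambda, written with 0-based indices:
  (i,j) with mu_(l-1) \<le> i < mu_l and i < j < mu_l for some l in 1..k.\<close>
definition Phi :: "complex mat \<Rightarrow> complex \<Rightarrow> (nat \<times> nat) set" where
  "Phi A lam = {(i,j). \<exists>l. 1 \<le> l \<and> weyr A lam l > 0 \<and>
      weyr_mu A lam (l - 1) \<le> i \<and> i < weyr_mu A lam l \<and> i < j \<and> j < weyr_mu A lam l}"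

definition good_pair :: "complex mat \<Rightarrow> complex \<Rightarrow> nat \<Rightarrow> (nat \<times> nat \<Rightarrow> complex)
    \<Rightarrow> complex mat \<Rightarrow> complex mat \<Rightarrow> bool" where
  "good_pair A lam m b U S \<longleftrightarrow>
     U \<in> carrier_mat (dim_row A) m \<and> mat_adjoint U * U = 1\<^sub>m m \<and>
     staircase A lam m S \<and>
     A * U - U * (lam \<cdot>\<^sub>m 1\<^sub>m m + S) = 0\<^sub>m (dim_row A) m \<and>
     (\<forall>(i,j)\<in>Phi A lam. conjugate (col U i) \<bullet> vec (dim_row A) (\<lambda>r. b (r,j)) = 0)"

end

(*
  Write K = A - lam I and N_l = ker K^l, so that dim N_l = mu_l.  For every good pair the
  first mu_l columns of U form an orthonormal basis of N_l; this forces S to be staircase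
  and S = U^H K U.  Such U exist for every b: the p-th column, p in block l, must lie in
  N_l (of dimension mu_l) and satisfy mu_l - 1 homogeneous linear conditions.

  For uniqueness fix one such orthonormal basis Z adapted to the N_l.  Within block l, the
  conditions of Phi make the matrix (u_i^H b_j) of the block lower triangular, and the Gram
  matrix (z_i^H b_j) of the block (first position omitted) factors through it.  If all these
  determinants are nonzero, every diagonal entry u_j^H b_j off the first position of a block
  is nonzero, and an induction over the columns shows that each column of a second good pair
  is a unimodular multiple of the corresponding column of U.  The product of the
  determinants is a polynomial in b that equals 1 at b = Z, so it vanishes only on a null set.
*)

theory Submission
  imports Defs
    "Jordan_Normal_Form.Jordan_Normal_Form_Existence"
    "Jordan_Normal_Form.Jordan_Normal_Form_Uniqueness"
    "Jordan_Normal_Form.DL_Rank"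
begin

section \<open>Zero sets of polynomial functions\<close>

inductive poly_fun :: "'i set \<Rightarrow> (('i \<Rightarrow> complex) \<Rightarrow> complex) \<Rightarrow> bool" for I where
  poly_fun_const: "poly_fun I (\<lambda>_. c)"
| poly_fun_var: "i \<in> I \<Longrightarrow> poly_fun I (\<lambda>b. b i)"
| poly_fun_add: "poly_fun I f \<Longrightarrow> poly_fun I g \<Longrightarrow> poly_fun I (\<lambda>b. f b + g b)"
| poly_fun_mult: "poly_fun I f \<Longrightarrow> poly_fun I g \<Longrightarrow> poly_fun I (\<lambda>b. f b * g b)"

lemma poly_fun_sum:
  "finite S \<Longrightarrow> (\<And>s. s \<in> S \<Longrightarrow> poly_fun I (f s)) \<Longrightarrow> poly_fun I (\<lambda>b. \<Sum>s\<in>S. f s b)"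
  by (induct S rule: finite_induct) (auto intro: poly_fun.intros)

lemma poly_fun_prod:
  "finite S \<Longrightarrow> (\<And>s. s \<in> S \<Longrightarrow> poly_fun I (f s)) \<Longrightarrow> poly_fun I (\<lambda>b. \<Prod>s\<in>S. f s b)"
  by (induct S rule: finite_induct) (auto intro: poly_fun.intros)

lemma poly_fun_cong: "poly_fun I f \<Longrightarrow> (\<And>i. i \<in> I \<Longrightarrow> b i = b' i) \<Longrightarrow> f b = f b'"
  by (induct rule: poly_fun.induct) auto

lemma poly_fun_measurable: "poly_fun I f \<Longrightarrow> f \<in> borel_measurable (PiM I (\<lambda>_. lborel))"
proof (induct rule: poly_fun.induct)
  case (poly_fun_var i)
  then show ?case using measurable_component_singleton[of i I "\<lambda>_. lborel"] by simp
qed auto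

lemma poly_fun_as_poly_in_var:
  assumes "poly_fun (insert i J) f" "i \<notin> J"
  shows "\<exists>p. (\<forall>k. poly_fun J (\<lambda>b. coeff (p b) k)) \<and> (\<forall>b. f b = poly (p b) (b i))"
  using assms(1)
proof (induct rule: poly_fun.induct)
  case (poly_fun_const c)
  show ?case
    by (rule exI[of _ "\<lambda>_. [:c:]"]) (auto intro: poly_fun.intros simp: coeff_pCons split: nat.splits)
next
  case (poly_fun_var j)
  show ?case
  proof (cases "j = i")
    case True
    then show ?thesis by (intro exI[of _ "\<lambda>_. [:0, 1:]"]) (auto intro: poly_fun.intros)
  next
    case False
    with poly_fun_var have "j \<in> J" by auto
    then have "poly_fun J (\<lambda>b. coeff [:b j:] k)" for k
      by (cases k) (auto intro: poly_fun.intros)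
    then show ?thesis by (intro exI[of _ "\<lambda>b. [:b j:]"]) auto
  qed
next
  case (poly_fun_add f g)
  then obtain p q where p: "\<And>k. poly_fun J (\<lambda>b. coeff (p b) k)" "\<And>b. f b = poly (p b) (b i)"
    and q: "\<And>k. poly_fun J (\<lambda>b. coeff (q b) k)" "\<And>b. g b = poly (q b) (b i)" by blast
  have "poly_fun J (\<lambda>b. coeff (p b + q b) k)" for k
    using poly_fun.poly_fun_add[OF p(1) q(1)] by simp
  then show ?case by (intro exI[of _ "\<lambda>b. p b + q b"]) (simp add: p q)
next
  case (poly_fun_mult f g)
  then obtain p q where p: "\<And>k. poly_fun J (\<lambda>b. coeff (p b) k)" "\<And>b. f b = poly (p b) (b i)"
    and q: "\<And>k. poly_fun J (\<lambda>b. coeff (q b) k)" "\<And>b. g b = poly (q b) (b i)" by blast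
  have "poly_fun J (\<lambda>b. coeff (p b * q b) k)" for k
    unfolding coeff_mult by (rule poly_fun_sum) (auto intro!: poly_fun.intros p q)
  then show ?case by (intro exI[of _ "\<lambda>b. p b * q b"]) (auto simp: p q)
qed

lemma (in product_sigma_finite) AE_PiM_insertI:
  assumes J: "finite J" "i \<notin> J"
    and P: "{x \<in> space (PiM (insert i J) M). P x} \<in> sets (PiM (insert i J) M)"
    and AE: "AE x in PiM J M. AE y in M i. P (x(i := y))"
  shows "AE x in PiM (insert i J) M. P x"
proof -
  let ?N = "{x \<in> space (PiM (insert i J) M). \<not> P x}"
  have "?N = space (PiM (insert i J) M) - {x \<in> space (PiM (insert i J) M). P x}"
    by blast
  then have N: "?N \<in> sets (PiM (insert i J) M)"
    using P by simp
  have "emeasure (PiM (insert i J) M) ?N = (\<integral>\<^sup>+ x. indicator ?N x \<partial>PiM (insert i J) M)"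
    using N by simp
  also have "\<dots> = (\<integral>\<^sup>+ x. (\<integral>\<^sup>+ y. indicator ?N (x(i := y)) \<partial>M i) \<partial>PiM J M)"
    using J N by (intro product_nn_integral_insert) auto
  also have "\<dots> = (\<integral>\<^sup>+ x. 0 \<partial>PiM J M)"
  proof (rule nn_integral_cong_AE)
    show "AE x in PiM J M. (\<integral>\<^sup>+ y. indicator ?N (x(i := y)) \<partial>M i) = 0"
      using AE
    proof eventually_elim
      case (elim x)
      then have "AE y in M i. indicator ?N (x(i := y)) = (0 :: ennreal)"
        by eventually_elim (simp add: indicator_def)
      from nn_integral_cong_AE[OF this] show ?case by simp
    qed
  qed
  finally show ?thesis
    using AE_iff_measurable[OF N refl] by simp
qed

lemma poly_fun_AE_nonzero:
  assumes "finite I" "poly_fun I f" "f b0 \<noteq> 0"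
  shows "AE b in PiM I (\<lambda>_. lborel :: complex measure). f b \<noteq> 0"
  using assms
proof (induct I arbitrary: f b0 rule: finite_induct)
  case empty
  have "f b \<noteq> 0" for b
    using empty(2) poly_fun_cong[OF empty(1), of b b0] by simp
  then show ?case by simp
next
  case (insert i J)
  interpret product_sigma_finite "\<lambda>_. lborel :: complex measure" ..
  obtain p where p: "\<And>k. poly_fun J (\<lambda>b. coeff (p b) k)" "\<And>b. f b = poly (p b) (b i)"
    using poly_fun_as_poly_in_var[OF insert(4,2)] by blast
  have p_upd: "p (b(i := y)) = p b" for b y
  proof -
    have "coeff (p (b(i := y))) k = coeff (p b) k" for k
      by (rule poly_fun_cong[OF p(1)]) (use insert(2) in auto)
    then show ?thesis by (simp add: poly_eq_iff)
  qed
  have "p b0 \<noteq> 0"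
    using insert(5) p(2) by auto
  then obtain k where "coeff (p b0) k \<noteq> 0"
    by (meson leading_coeff_0_iff)
  then have AE_coeff: "AE b in PiM J (\<lambda>_. lborel). coeff (p b) k \<noteq> 0"
    by (rule insert(3)[OF p(1)])
  show ?case
  proof (rule AE_PiM_insertI[OF insert(1,2)])
    show "{b \<in> space (PiM (insert i J) (\<lambda>_. lborel)). f b \<noteq> 0} \<in> sets (PiM (insert i J) (\<lambda>_. lborel))"
      by (rule measurable_sets_Collect[OF poly_fun_measurable[OF insert(4)]]) simp
    show "AE b in PiM J (\<lambda>_. lborel). AE y in lborel. f (b(i := y)) \<noteq> 0"
      using AE_coeff
    proof eventually_elim
      case (elim b)
      then have "finite {y. poly (p b) y = 0}" by (intro poly_roots_finite) auto
      then have "AE y in lborel. y \<notin> {y. poly (p b) y = 0}"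
        by (intro AE_not_in finite_imp_null_set_lborel)
      then show ?case by eventually_elim (simp add: p(2) p_upd)
    qed
  qed
qed

lemma poly_fun_det:
  assumes M: "\<And>b. M b \<in> carrier_mat d d"
    and entries: "\<And>i j. i < d \<Longrightarrow> j < d \<Longrightarrow> poly_fun I (\<lambda>b. M b $$ (i, j))"
  shows "poly_fun I (\<lambda>b. det (M b))"
proof -
  have "det (M b) = (\<Sum>p\<in>{p. p permutes {0..<d}}. signof p * (\<Prod>i\<in>{0..<d}. M b $$ (i, p i)))" for b
    using M[of b] unfolding det_def by simp
  moreover have "poly_fun I (\<lambda>b. \<Sum>p\<in>{p. p permutes {0..<d}}. signof p * (\<Prod>i\<in>{0..<d}. M b $$ (i, p i)))"
  proof (intro poly_fun_sum poly_fun.poly_fun_mult poly_fun.poly_fun_const poly_fun_prod)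
    fix p i assume "p \<in> {p. p permutes {0..<d}}" "i \<in> {0..<d}"
    then show "poly_fun I (\<lambda>b. M b $$ (i, p i))"
      using entries permutes_in_image by fastforce
  qed (auto simp: finite_permutations)
  ultimately show ?thesis by simp
qed

section \<open>Orthonormal families of complex vectors\<close>

unbundle no inner_syntax
unbundle no vec_syntax

definition vec_lincomb :: "nat \<Rightarrow> nat \<Rightarrow> (nat \<Rightarrow> complex) \<Rightarrow> (nat \<Rightarrow> complex vec) \<Rightarrow> complex vec" where
  "vec_lincomb n k c u = Matrix.vec n (\<lambda>r. \<Sum>i<k. c i * u i $ r)"

lemma vec_lincomb_carrier [simp]:
  "vec_lincomb n k c u \<in> carrier_vec n" "dim_vec (vec_lincomb n k c u) = n"
  by (auto simp: vec_lincomb_def)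

lemma index_vec_lincomb [simp]: "r < n \<Longrightarrow> vec_lincomb n k c u $ r = (\<Sum>i<k. c i * u i $ r)"
  by (simp add: vec_lincomb_def)

lemma conjugate_scalar_prod_sum:
  "v \<in> carrier_vec n \<Longrightarrow> w \<in> carrier_vec n \<Longrightarrow> conjugate v \<bullet> w = (\<Sum>r<n. cnj (v $ r) * w $ r)"
  unfolding scalar_prod_def by (auto intro!: sum.cong simp: atLeast0LessThan)

lemma cnj_conjugate_scalar_prod:
  fixes v w :: "complex vec"
  assumes "v \<in> carrier_vec n" "w \<in> carrier_vec n"
  shows "cnj (conjugate v \<bullet> w) = conjugate w \<bullet> v"
  using conjugate_conjugate_sprod[OF assms] conjugate_vec_sprod_comm[OF assms] by simp

lemma index_mult_mat_vec_sum:
  "M \<in> carrier_mat nr n \<Longrightarrow> v \<in> carrier_vec n \<Longrightarrow> r < nr \<Longrightarrow>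
    (M *\<^sub>v v) $ r = (\<Sum>j<n. M $$ (r, j) * v $ j)"
  unfolding mult_mat_vec_def scalar_prod_def by (auto intro!: sum.cong simp: atLeast0LessThan)

lemma index_mult_mat_sum:
  "A \<in> carrier_mat nr k \<Longrightarrow> B \<in> carrier_mat k nc \<Longrightarrow> i < nr \<Longrightarrow> j < nc \<Longrightarrow>
    (A * B) $$ (i, j) = (\<Sum>p<k. A $$ (i, p) * B $$ (p, j))"
  by (auto intro!: sum.cong simp: atLeast0LessThan scalar_prod_def)

lemma scalar_prod_vec_lincomb:
  assumes "w \<in> carrier_vec n" "\<And>i. i < k \<Longrightarrow> u i \<in> carrier_vec n"
  shows "conjugate w \<bullet> vec_lincomb n k c u = (\<Sum>i<k. c i * (conjugate w \<bullet> u i))"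
proof -
  have "conjugate w \<bullet> vec_lincomb n k c u = (\<Sum>r<n. cnj (w $ r) * (\<Sum>i<k. c i * u i $ r))"
    using assms by (simp add: conjugate_scalar_prod_sum)
  also have "\<dots> = (\<Sum>i<k. c i * (\<Sum>r<n. cnj (w $ r) * u i $ r))"
    by (simp add: sum_distrib_left sum_distrib_right mult_ac sum.swap[of _ "{..<n}"])
  also have "\<dots> = (\<Sum>i<k. c i * (conjugate w \<bullet> u i))"
    using assms by (simp add: conjugate_scalar_prod_sum)
  finally show ?thesis .
qed

lemma vec_lincomb_scalar_prod:
  assumes "w \<in> carrier_vec n" "\<And>i. i < k \<Longrightarrow> u i \<in> carrier_vec n"
  shows "conjugate (vec_lincomb n k c u) \<bullet> w = (\<Sum>i<k. cnj (c i) * (conjugate (u i) \<bullet> w))"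
proof -
  have "conjugate (vec_lincomb n k c u) \<bullet> w = cnj (conjugate w \<bullet> vec_lincomb n k c u)"
    using cnj_conjugate_scalar_prod[OF assms(1) vec_lincomb_carrier(1)] by simp
  also have "\<dots> = (\<Sum>i<k. cnj (c i) * (conjugate (u i) \<bullet> w))"
    using scalar_prod_vec_lincomb[OF assms] cnj_conjugate_scalar_prod[OF assms(1) assms(2)] by simp
  finally show ?thesis .
qed

lemma mult_mat_vec_lincomb:
  assumes M: "M \<in> carrier_mat nr n" and u: "\<And>i. i < k \<Longrightarrow> u i \<in> carrier_vec n"
  shows "M *\<^sub>v vec_lincomb n k c u = vec_lincomb nr k c (\<lambda>i. M *\<^sub>v u i)"
proof (rule eq_vecI)
  fix r assume "r < dim_vec (vec_lincomb nr k c (\<lambda>i. M *\<^sub>v u i))"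
  then have r: "r < nr" by simp
  have "(M *\<^sub>v vec_lincomb n k c u) $ r = (\<Sum>j<n. M $$ (r, j) * (\<Sum>i<k. c i * u i $ j))"
    using M r by (simp add: index_mult_mat_vec_sum del: index_mult_mat_vec)
  also have "\<dots> = (\<Sum>i<k. c i * (\<Sum>j<n. M $$ (r, j) * u i $ j))"
    by (simp add: sum_distrib_left sum_distrib_right mult_ac sum.swap[of _ "{..<n}"])
  also have "\<dots> = vec_lincomb nr k c (\<lambda>i. M *\<^sub>v u i) $ r"
    using M r u by (simp add: index_mult_mat_vec_sum del: index_mult_mat_vec)
  finally show "(M *\<^sub>v vec_lincomb n k c u) $ r = vec_lincomb nr k c (\<lambda>i. M *\<^sub>v u i) $ r" .
qed (use M in auto)

lemma sum_lessThan_add_shift: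
  fixes f :: "nat \<Rightarrow> 'a :: comm_monoid_add"
  shows "(\<Sum>i<s + d. f i) = (\<Sum>i<s. f i) + (\<Sum>t<d. f (s + t))"
  by (induct d) (auto simp: add.assoc)

lemma vec_lincomb_single:
  assumes "\<And>i. i < k \<Longrightarrow> i \<noteq> j \<Longrightarrow> c i = 0" "j < k" "u j \<in> carrier_vec n"
  shows "vec_lincomb n k c u = c j \<cdot>\<^sub>v u j"
proof (rule eq_vecI)
  fix r assume "r < dim_vec (c j \<cdot>\<^sub>v u j)"
  then have r: "r < n" using assms by simp
  have "(\<Sum>i<k. c i * u i $ r) = c j * u j $ r"
    using assms by (subst sum.remove[of _ j]) (auto intro!: sum.neutral)
  then show "vec_lincomb n k c u $ r = (c j \<cdot>\<^sub>v u j) $ r" using r assms by simp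
qed (use assms in simp)

lemma vec_lincomb_orthonormal_coeff:
  assumes u: "\<And>i. i < k \<Longrightarrow> u i \<in> carrier_vec n"
    and on: "\<And>i j. i < k \<Longrightarrow> j < k \<Longrightarrow> conjugate (u i) \<bullet> u j = (if i = j then 1 else 0)"
    and j: "j < k"
  shows "conjugate (u j) \<bullet> vec_lincomb n k c u = c j"
proof -
  have "conjugate (u j) \<bullet> vec_lincomb n k c u = (\<Sum>i<k. c i * (conjugate (u j) \<bullet> u i))"
    using u j by (intro scalar_prod_vec_lincomb) auto
  also have "\<dots> = (\<Sum>i<k. if i = j then c j else 0)"
    using on j by (intro sum.cong) auto
  finally show ?thesis using j by simp
qed

lemma exists_unit_multiple:
  fixes x :: "complex vec"
  assumes x: "x \<in> carrier_vec n" "x \<noteq> 0\<^sub>v n"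
  shows "\<exists>c. conjugate (c \<cdot>\<^sub>v x) \<bullet> (c \<cdot>\<^sub>v x) = 1"
proof -
  have "conjugate x \<bullet> x > 0"
    using conjugate_square_greater_0_vec[OF x(1)] x conjugate_vec_sprod_comm[OF x(1) x(1)] by simp
  then have t: "conjugate x \<bullet> x = of_real (Re (conjugate x \<bullet> x))" "Re (conjugate x \<bullet> x) > 0"
    by (auto simp: less_complex_def complex_eq_iff)
  define \<tau> where "\<tau> = Re (conjugate x \<bullet> x)"
  define c where "c = complex_of_real (1 / sqrt \<tau>)"
  have "conjugate (c \<cdot>\<^sub>v x) \<bullet> (c \<cdot>\<^sub>v x) = cnj c * c * of_real \<tau>"
    unfolding conjugate_smult_vec \<tau>_def using x t(1) by (simp add: mult.assoc)
  also have "\<dots> = of_real (1 / sqrt \<tau> * (1 / sqrt \<tau>) * \<tau>)"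
    unfolding c_def by (simp only: complex_cnj_complex_of_real of_real_mult)
  also have "1 / sqrt \<tau> * (1 / sqrt \<tau>) * \<tau> = \<tau> / (sqrt \<tau> * sqrt \<tau>)"
    by simp
  also have "\<dots> = 1"
    using t(2) by (simp add: \<tau>_def)
  finally show ?thesis by auto
qed

lemma cmod_eq_1_if_cnj_mult_eq_1:
  assumes "cnj a * a = 1"
  shows "cmod a = 1"
proof -
  have "complex_of_real ((cmod a)\<^sup>2) = a * cnj a"
    by (rule complex_norm_square)
  also have "\<dots> = 1"
    using assms by (simp add: mult.commute)
  finally have "complex_of_real ((cmod a)\<^sup>2) = 1" .
  then have "(cmod a)\<^sup>2 = 1"
    by (metis of_real_eq_1_iff)
  then show ?thesis
    using norm_ge_zero[of a] by (auto simp: power2_eq_1_iff)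
qed

lemma mat_adjoint_carrier: "U \<in> carrier_mat n m \<Longrightarrow> mat_adjoint U \<in> carrier_mat m n"
  unfolding mat_adjoint_def by auto

lemma index_mat_adjoint_mult:
  fixes U V :: "complex mat"
  assumes U: "U \<in> carrier_mat n m" and V: "V \<in> carrier_mat n k" and i: "i < m" and j: "j < k"
  shows "(mat_adjoint U * V) $$ (i, j) = conjugate (col U i) \<bullet> col V j"
proof -
  have "(mat_adjoint U * V) $$ (i, j) = (\<Sum>r<n. mat_adjoint U $$ (i, r) * V $$ (r, j))"
    by (rule index_mult_mat_sum[OF mat_adjoint_carrier[OF U] V i j])
  also have "\<dots> = (\<Sum>r<n. cnj (col U i $ r) * col V j $ r)"
    using U V i j by (intro sum.cong) (auto simp: mat_adjoint_def mat_of_rows_index)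
  also have "\<dots> = conjugate (col U i) \<bullet> col V j"
    using U V i j by (subst conjugate_scalar_prod_sum[of _ n]) auto
  finally show ?thesis .
qed

lemma mat_adjoint_mult_eq_one_col:
  fixes U :: "complex mat"
  assumes "U \<in> carrier_mat n m" "mat_adjoint U * U = 1\<^sub>m m" "i < m" "j < m"
  shows "conjugate (col U i) \<bullet> col U j = (if i = j then 1 else 0)"
  using index_mat_adjoint_mult[OF assms(1,1,3,4)] assms(2-4) by simp

section \<open>Kernels and orthogonal families\<close>

abbreviation vec_lin_dep :: "nat \<Rightarrow> complex vec set \<Rightarrow> bool" where
  "vec_lin_dep n W \<equiv> LinearCombinations.module.lin_dep class_ring (module_vec TYPE(complex) n) W"

lemma wide_mat_kernel_nonzero:
  assumes C: "(C :: complex mat) \<in> carrier_mat r k" and rk: "r < k"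
  shows "\<exists>v. v \<in> carrier_vec k \<and> v \<noteq> 0\<^sub>v k \<and> C *\<^sub>v v = 0\<^sub>v r"
proof -
  define C' where "C' = Matrix.mat k k (\<lambda>(i, j). if i < r then C $$ (i, j) else 0)"
  have C': "C' \<in> carrier_mat k k" and Ct: "transpose_mat C' \<in> carrier_mat k k"
    unfolding C'_def by auto
  have "transpose_mat C' *\<^sub>v unit_vec k (k - 1) = 0\<^sub>v k"
  proof (rule eq_vecI)
    fix i assume "i < dim_vec (0\<^sub>v k :: complex vec)"
    then have i: "i < k" by simp
    have "(transpose_mat C' *\<^sub>v unit_vec k (k - 1)) $ i
        = (\<Sum>j<k. transpose_mat C' $$ (i, j) * unit_vec k (k - 1) $ j)"
      using i Ct by (simp add: index_mult_mat_vec_sum del: index_mult_mat_vec)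
    also have "\<dots> = 0"
      using i rk by (intro sum.neutral) (auto simp: C'_def)
    finally show "(transpose_mat C' *\<^sub>v unit_vec k (k - 1)) $ i = 0\<^sub>v k $ i" using i by simp
  qed (use Ct in auto)
  moreover have "unit_vec k (k - 1) \<noteq> (0\<^sub>v k :: complex vec)"
  proof
    assume "unit_vec k (k - 1) = (0\<^sub>v k :: complex vec)"
    then have "unit_vec k (k - 1) $ (k - 1) = (0\<^sub>v k :: complex vec) $ (k - 1)" by simp
    then show False using rk by simp
  qed
  ultimately have "det (transpose_mat C') = 0"
    using det_0_iff_vec_prod_zero_field[OF Ct] unit_vec_carrier by blast
  then have "det C' = 0" using det_transpose[OF C'] by simp
  then obtain v where v: "v \<in> carrier_vec k" "v \<noteq> 0\<^sub>v k" "C' *\<^sub>v v = 0\<^sub>v k"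
    using det_0_iff_vec_prod_zero_field[OF C'] by auto
  have "C *\<^sub>v v = 0\<^sub>v r"
  proof (rule eq_vecI)
    fix i assume "i < dim_vec (0\<^sub>v r :: complex vec)"
    then have i: "i < r" by simp
    have "(C' *\<^sub>v v) $ i = (C *\<^sub>v v) $ i"
      using i rk C v(1) C' by (simp add: index_mult_mat_vec_sum del: index_mult_mat_vec) (simp add: C'_def)
    then show "(C *\<^sub>v v) $ i = 0\<^sub>v r $ i" using v(3) i rk by simp
  qed (use C in auto)
  with v show ?thesis by blast
qed

lemma lin_indpt_kernel_card_le:
  assumes M: "(M :: complex mat) \<in> carrier_mat nr nc" and W: "W \<subseteq> mat_kernel M"
    and li: "\<not> vec_lin_dep nc W"
  shows "finite W \<and> card W \<le> kernel_dim M"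
proof -
  interpret K: kernel nr nc M by unfold_locales (rule M)
  obtain B where "finite B" "K.basis B" using kernel_basis_exists[OF M] by blast
  then have "K.Ker.fin_dim" unfolding K.Ker.fin_dim_def K.Ker.basis_def by auto
  moreover have "\<not> K.lin_dep W" using K.lindep_same[OF W] li by simp
  ultimately show ?thesis using K.Ker.li_le_dim W by simp
qed

lemma scalar_prod_lincomb:
  fixes y :: "complex vec" and A :: "complex vec set"
  assumes y: "y \<in> carrier_vec n" and A: "finite A" "A \<subseteq> carrier_vec n"
  shows "conjugate y \<bullet> LinearCombinations.module.lincomb (module_vec TYPE(complex) n) a A
    = (\<Sum>w\<in>A. a w * (conjugate y \<bullet> w))"
proof -
  interpret vec_space "TYPE(complex)" n .
  have "lincomb a A \<in> carrier_vec n" using A by (intro lincomb_closed) auto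
  then have "conjugate y \<bullet> lincomb a A = (\<Sum>r<n. cnj (y $ r) * (\<Sum>w\<in>A. a w * w $ r))"
    using y A by (simp add: conjugate_scalar_prod_sum lincomb_index)
  also have "\<dots> = (\<Sum>w\<in>A. a w * (\<Sum>r<n. cnj (y $ r) * w $ r))"
    by (simp add: sum_distrib_left sum_distrib_right mult_ac sum.swap[of _ "{..<n}"])
  also have "\<dots> = (\<Sum>w\<in>A. a w * (conjugate y \<bullet> w))"
    using y A by (intro sum.cong refl) (auto simp: conjugate_scalar_prod_sum)
  finally show ?thesis .
qed

lemma orthogonal_family_lin_indpt:
  fixes u :: "nat \<Rightarrow> complex vec"
  assumes u: "\<And>i. i < k \<Longrightarrow> u i \<in> carrier_vec n"
    and orth: "\<And>i j. i < k \<Longrightarrow> j < k \<Longrightarrow> i \<noteq> j \<Longrightarrow> conjugate (u i) \<bullet> u j = 0"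
    and nz: "\<And>i. i < k \<Longrightarrow> conjugate (u i) \<bullet> u i \<noteq> 0"
  shows "inj_on u {..<k}" "\<not> vec_lin_dep n (u ` {..<k})"
proof -
  show inj: "inj_on u {..<k}"
  proof (rule inj_onI, rule ccontr)
    fix i j assume "i \<in> {..<k}" "j \<in> {..<k}" "u i = u j" "i \<noteq> j"
    then show False using orth[of i j] nz[of i] by auto
  qed
  interpret vec_space "TYPE(complex)" n .
  show "\<not> vec_lin_dep n (u ` {..<k})"
  proof (rule finite_lin_indpt2)
    show "u ` {..<k} \<subseteq> carrier_vec n" using u by auto
    fix a assume lc0: "lincomb a (u ` {..<k}) = 0\<^sub>v n"
    show "\<forall>v\<in>u ` {..<k}. a v = 0"
    proof
      fix v assume "v \<in> u ` {..<k}"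
      then obtain j where j: "j < k" "v = u j" by auto
      have "0 = conjugate (u j) \<bullet> lincomb a (u ` {..<k})"
        using lc0 u[OF j(1)] by simp
      also have "\<dots> = (\<Sum>w\<in>u ` {..<k}. a w * (conjugate (u j) \<bullet> w))"
        using u j by (intro scalar_prod_lincomb) auto
      also have "\<dots> = (\<Sum>i<k. a (u i) * (conjugate (u j) \<bullet> u i))"
        by (rule sum.reindex_cong[OF inj refl]) simp
      also have "\<dots> = a (u j) * (conjugate (u j) \<bullet> u j)"
        using j orth by (subst sum.remove[of _ j]) (auto intro!: sum.neutral)
      finally show "a v = 0" using nz[OF j(1)] j by simp
    qed
  qed simp
qed

lemma orthogonal_family_kernel_card_le:
  fixes u :: "nat \<Rightarrow> complex vec"
  assumes M: "(M :: complex mat) \<in> carrier_mat nr n"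
    and u: "\<And>i. i < k \<Longrightarrow> u i \<in> mat_kernel M"
    and orth: "\<And>i j. i < k \<Longrightarrow> j < k \<Longrightarrow> i \<noteq> j \<Longrightarrow> conjugate (u i) \<bullet> u j = 0"
    and nz: "\<And>i. i < k \<Longrightarrow> conjugate (u i) \<bullet> u i \<noteq> 0"
  shows "k \<le> kernel_dim M"
proof -
  have "\<And>i. i < k \<Longrightarrow> u i \<in> carrier_vec n"
    using u mat_kernel_carrier[OF M] by auto
  note indep = orthogonal_family_lin_indpt[OF this orth nz]
  have "u ` {..<k} \<subseteq> mat_kernel M" using u by auto
  from lin_indpt_kernel_card_le[OF M this indep(2)] indep(1) show ?thesis
    by (simp add: card_image)
qed

lemma mat_kernel_basis_mat:
  assumes M: "(M :: complex mat) \<in> carrier_mat nr n"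
  obtains B where "B \<in> carrier_mat n (kernel_dim M)" "M * B = 0\<^sub>m nr (kernel_dim M)"
    "\<And>c. c \<in> carrier_vec (kernel_dim M) \<Longrightarrow> c \<noteq> 0\<^sub>v (kernel_dim M) \<Longrightarrow> B *\<^sub>v c \<noteq> 0\<^sub>v n"
proof -
  interpret K: kernel nr n M by unfold_locales (rule M)
  obtain Bs where Bs: "finite Bs" "K.basis Bs" using kernel_basis_exists[OF M] by blast
  have Bk: "Bs \<subseteq> mat_kernel M" using Bs(2) unfolding K.Ker.basis_def by auto
  have Bli: "\<not> vec_lin_dep n Bs" using Bs(2) K.lindep_same[OF Bk] unfolding K.Ker.basis_def by auto
  obtain bs where bs: "set bs = Bs" "distinct bs" using finite_distinct_list[OF Bs(1)] by blast
  have k: "length bs = kernel_dim M"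
    using bs K.Ker.dim_basis[OF Bs] distinct_card[OF bs(2)] by simp
  define B where "B = mat_of_cols n bs"
  have B: "B \<in> carrier_mat n (kernel_dim M)" unfolding B_def k[symmetric] by simp
  have colsB: "cols B = bs"
    unfolding B_def using bs Bk mat_kernel_carrier[OF M] by auto
  show ?thesis
  proof (rule that[OF B])
    show "M * B = 0\<^sub>m nr (kernel_dim M)"
    proof (rule eq_matI)
      fix i j assume ij: "i < dim_row (0\<^sub>m nr (kernel_dim M) :: complex mat)"
        "j < dim_col (0\<^sub>m nr (kernel_dim M) :: complex mat)"
      then have "col B j \<in> mat_kernel M" using colsB bs Bk B
        by (metis carrier_matD(2) cols_length cols_nth nth_mem subset_iff index_zero_mat(3))
      then have "(M *\<^sub>v col B j) $ i = 0" using mat_kernelD[OF M] ij by auto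
      then show "(M * B) $$ (i, j) = 0\<^sub>m nr (kernel_dim M) $$ (i, j)" using ij M B by simp
    qed (use M B in auto)
  next
    fix c :: "complex vec"
    assume c: "c \<in> carrier_vec (kernel_dim M)" "c \<noteq> 0\<^sub>v (kernel_dim M)"
    show "B *\<^sub>v c \<noteq> 0\<^sub>v n"
    proof
      assume "B *\<^sub>v c = 0\<^sub>v n"
      then have "vec_lin_dep n (set (cols B))"
        by (intro K.NC.lin_depI[OF B c]) (use colsB bs in auto)
      then show False using Bli colsB bs by simp
    qed
  qed
qed

lemma mat_kernel_orthogonal_nonzero:
  fixes v :: "nat \<Rightarrow> complex vec"
  assumes M: "(M :: complex mat) \<in> carrier_mat nr n"
    and v: "\<And>i. i < r \<Longrightarrow> v i \<in> carrier_vec n"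
    and r: "r < kernel_dim M"
  shows "\<exists>x. x \<in> mat_kernel M \<and> x \<noteq> 0\<^sub>v n \<and> (\<forall>i<r. conjugate (v i) \<bullet> x = 0)"
proof -
  let ?k = "kernel_dim M"
  obtain B where B: "B \<in> carrier_mat n ?k" "M * B = 0\<^sub>m nr ?k"
    and B_inj: "\<And>c. c \<in> carrier_vec ?k \<Longrightarrow> c \<noteq> 0\<^sub>v ?k \<Longrightarrow> B *\<^sub>v c \<noteq> 0\<^sub>v n"
    using mat_kernel_basis_mat[OF M] by blast
  define V where "V = Matrix.mat r n (\<lambda>(i, j). cnj (v i $ j))"
  have V: "V \<in> carrier_mat r n" unfolding V_def by simp
  obtain c where c: "c \<in> carrier_vec ?k" "c \<noteq> 0\<^sub>v ?k" "(V * B) *\<^sub>v c = 0\<^sub>v r"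
    using wide_mat_kernel_nonzero[of "V * B" r ?k] V B r by auto
  define x where "x = B *\<^sub>v c"
  have xc: "x \<in> carrier_vec n" unfolding x_def using B c by simp
  have "0\<^sub>m nr ?k *\<^sub>v c = 0\<^sub>v nr"
    by (rule eq_vecI) (use c(1) in \<open>auto simp: scalar_prod_def\<close>)
  then have "M *\<^sub>v x = 0\<^sub>v nr"
    unfolding x_def using assoc_mult_mat_vec[OF M B(1) c(1), symmetric] B(2) by simp
  then have "x \<in> mat_kernel M" using mat_kernelI[OF M xc] by simp
  moreover have "x \<noteq> 0\<^sub>v n" unfolding x_def using B_inj c by blast
  moreover have "conjugate (v i) \<bullet> x = 0" if i: "i < r" for i
  proof -
    have "conjugate (v i) \<bullet> x = (\<Sum>j<n. V $$ (i, j) * x $ j)"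
      using i v[OF i] xc by (simp add: V_def conjugate_scalar_prod_sum)
    also have "\<dots> = (V *\<^sub>v x) $ i"
      by (rule index_mult_mat_vec_sum[OF V xc i, symmetric])
    also have "\<dots> = 0"
      unfolding x_def using assoc_mult_mat_vec[OF V B(1) c(1), symmetric] c(3) i by simp
    finally show ?thesis .
  qed
  ultimately show ?thesis by blast
qed

lemma orthonormal_kernel_orthogonal_zero:
  fixes u :: "nat \<Rightarrow> complex vec"
  assumes M: "(M :: complex mat) \<in> carrier_mat nr n"
    and u: "\<And>i. i < k \<Longrightarrow> u i \<in> mat_kernel M"
    and on: "\<And>i j. i < k \<Longrightarrow> j < k \<Longrightarrow> conjugate (u i) \<bullet> u j = (if i = j then 1 else 0)"
    and dim: "kernel_dim M \<le> k"
    and y: "y \<in> mat_kernel M" and y_orth: "\<And>j. j < k \<Longrightarrow> conjugate (u j) \<bullet> y = 0"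
  shows "y = 0\<^sub>v n"
proof (rule ccontr)
  assume "y \<noteq> 0\<^sub>v n"
  have uc: "\<And>i. i < k \<Longrightarrow> u i \<in> carrier_vec n" using u mat_kernel_carrier[OF M] by auto
  have yc: "y \<in> carrier_vec n" using y mat_kernel_carrier[OF M] by auto
  have "Suc k \<le> kernel_dim M"
  proof (rule orthogonal_family_kernel_card_le[OF M, where u = "u(k := y)"])
    show "(u(k := y)) i \<in> mat_kernel M" if "i < Suc k" for i
      using that u y by (cases "i = k") auto
    show "conjugate ((u(k := y)) i) \<bullet> (u(k := y)) j = 0"
      if "i < Suc k" "j < Suc k" "i \<noteq> j" for i j
    proof (cases "i = k")
      case True
      then have "j < k" using that by auto
      then have "conjugate y \<bullet> u j = 0"
        using cnj_conjugate_scalar_prod[OF uc yc, of j] y_orth[of j] by simp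
      then show ?thesis using True \<open>j < k\<close> by simp
    next
      case False
      then have "i < k" using that by auto
      then show ?thesis using that on[of i j] y_orth[of i] by (cases "j = k") auto
    qed
    show "conjugate ((u(k := y)) i) \<bullet> (u(k := y)) i \<noteq> 0" if "i < Suc k" for i
      using that on \<open>y \<noteq> 0\<^sub>v n\<close> conjugate_square_eq_0_vec[OF yc] conjugate_vec_sprod_comm[OF yc yc]
      by (cases "i = k") auto
  qed
  with dim show False by simp
qed

lemma orthonormal_kernel_expansion:
  fixes u :: "nat \<Rightarrow> complex vec"
  assumes M: "(M :: complex mat) \<in> carrier_mat nr n"
    and u: "\<And>i. i < k \<Longrightarrow> u i \<in> mat_kernel M"
    and on: "\<And>i j. i < k \<Longrightarrow> j < k \<Longrightarrow> conjugate (u i) \<bullet> u j = (if i = j then 1 else 0)"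
    and dim: "kernel_dim M \<le> k"
    and x: "x \<in> mat_kernel M"
  shows "x = vec_lincomb n k (\<lambda>i. conjugate (u i) \<bullet> x) u"
proof -
  let ?p = "vec_lincomb n k (\<lambda>i. conjugate (u i) \<bullet> x) u"
  have uc: "\<And>i. i < k \<Longrightarrow> u i \<in> carrier_vec n" using u mat_kernel_carrier[OF M] by auto
  have xc: "x \<in> carrier_vec n" using x mat_kernel_carrier[OF M] by auto
  have "M *\<^sub>v ?p = vec_lincomb nr k (\<lambda>i. conjugate (u i) \<bullet> x) (\<lambda>i. M *\<^sub>v u i)"
    by (rule mult_mat_vec_lincomb[OF M uc])
  also have "\<dots> = 0\<^sub>v nr"
    by (rule eq_vecI) (use u mat_kernelD[OF M] in auto)
  finally have "M *\<^sub>v (x - ?p) = 0\<^sub>v nr"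
    using mult_minus_distrib_mat_vec[OF M xc vec_lincomb_carrier(1)] mat_kernelD[OF M x] by simp
  then have res: "x - ?p \<in> mat_kernel M" using mat_kernelI[OF M] xc by simp
  have orth: "conjugate (u j) \<bullet> (x - ?p) = 0" if j: "j < k" for j
    using vec_lincomb_orthonormal_coeff[OF uc on j] j
      scalar_prod_minus_distrib[OF carrier_vec_conjugate[OF uc[OF j]] xc vec_lincomb_carrier(1)] by simp
  have "x - ?p = 0\<^sub>v n"
    by (rule orthonormal_kernel_orthogonal_zero[OF M u on dim res orth])
  show ?thesis
  proof (rule eq_vecI)
    fix i assume i: "i < dim_vec ?p"
    have "(x - ?p) $ i = 0" using \<open>x - ?p = 0\<^sub>v n\<close> i by simp
    then show "x $ i = ?p $ i" using xc i by simp
  qed (use xc in simp)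
qed

section \<open>The kernels of the powers of \<open>A - \<lambda>I\<close>\<close>

locale weyr_eigenvalue =
  fixes A :: "complex mat" and n :: nat and lam :: complex and m :: nat
  assumes A: "A \<in> carrier_mat n n" and m: "m = Polynomial.order lam (char_poly A)"
begin

definition K :: "complex mat" where "K = A - lam \<cdot>\<^sub>m 1\<^sub>m n"

definition ker_pow :: "nat \<Rightarrow> complex vec set" where "ker_pow l = mat_kernel (K ^\<^sub>m l)"

definition nullity :: "nat \<Rightarrow> nat" where "nullity l = kernel_dim (K ^\<^sub>m l)"

definition block :: "nat \<Rightarrow> nat" where "block p = weyr_block A lam p"

lemma K_carrier: "K \<in> carrier_mat n n"
  unfolding K_def by (rule minus_carrier_mat) simp

lemma K_pow_carrier: "K ^\<^sub>m l \<in> carrier_mat n n"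
  using K_carrier by simp

lemma nullity_Jordan_blocks: "\<exists>ds. (\<forall>l. nullity l = (\<Sum>d\<leftarrow>ds. min l d)) \<and> m = sum_list ds"
proof -
  obtain as where "char_poly A = (\<Prod>a\<leftarrow>as. [:- a, 1:])"
    using char_poly_factorized[OF A] by blast
  then obtain n_as where jnf: "jordan_nf A n_as"
    using jordan_nf_exists[OF A] by blast
  have "K = char_matrix A lam"
    unfolding K_def char_matrix_def using A by (intro eq_matI) auto
  then have "nullity l = (\<Sum>d\<leftarrow>map fst [(d, e)\<leftarrow>n_as . e = lam]. min l d)" for l
    using dim_gen_eigenspace[OF jnf, of lam l] unfolding dim_gen_eigenspace_def nullity_def by simp
  moreover have "m = sum_list (map fst [(d, e)\<leftarrow>n_as . e = lam])"
    unfolding m jordan_nf_order[OF jnf] by (induct n_as) auto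
  ultimately show ?thesis by blast
qed

lemma nullity_mono: "l \<le> l' \<Longrightarrow> nullity l \<le> nullity l'"
proof -
  assume "l \<le> l'"
  obtain ds where "\<forall>l. nullity l = (\<Sum>d\<leftarrow>ds. min l d)"
    using nullity_Jordan_blocks by blast
  moreover have "(\<Sum>d\<leftarrow>ds. min l d) \<le> (\<Sum>d\<leftarrow>ds. min l' d)"
    using \<open>l \<le> l'\<close> by (induct ds) auto
  ultimately show ?thesis by simp
qed

lemma nullity_le: "nullity l \<le> m"
proof -
  obtain ds where "\<forall>l. nullity l = (\<Sum>d\<leftarrow>ds. min l d)" "m = sum_list ds"
    using nullity_Jordan_blocks by blast
  moreover have "(\<Sum>d\<leftarrow>ds. min l d) \<le> sum_list ds" by (induct ds) auto
  ultimately show ?thesis by simp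
qed

lemma nullity_eq: "m \<le> l \<Longrightarrow> nullity l = m"
proof -
  assume "m \<le> l"
  obtain ds where "\<forall>l. nullity l = (\<Sum>d\<leftarrow>ds. min l d)" "m = sum_list ds"
    using nullity_Jordan_blocks by blast
  moreover have "sum_list ds \<le> l \<Longrightarrow> (\<Sum>d\<leftarrow>ds. min l d) = sum_list ds" by (induct ds) auto
  ultimately show ?thesis using \<open>m \<le> l\<close> by simp
qed

lemma nullity_0 [simp]: "nullity 0 = 0"
proof -
  obtain ds where "\<forall>l. nullity l = (\<Sum>d\<leftarrow>ds. min l d)"
    using nullity_Jordan_blocks by blast
  moreover have "(\<Sum>d\<leftarrow>ds. min 0 d) = (0::nat)" by (induct ds) auto
  ultimately show ?thesis by simp
qed

lemma weyr_eq: "weyr A lam l = nullity l - nullity (l - 1)"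
  unfolding weyr_def nullity_def K_def using A by simp

lemma weyr_mu_eq_nullity: "weyr_mu A lam l = nullity l"
proof (induct l)
  case 0
  show ?case by (simp add: weyr_mu_def)
next
  case (Suc l)
  then show ?case
    using nullity_mono[of l "Suc l"] by (simp add: weyr_mu_def weyr_eq)
qed

lemma block_eq_Least: "block p = (LEAST l. p < nullity l)"
  unfolding block_def weyr_block_def weyr_mu_eq_nullity ..

lemma less_nullity_block: "p < m \<Longrightarrow> p < nullity (block p)"
  unfolding block_eq_Least by (rule LeastI[where k = m]) (simp add: nullity_eq)

lemma block_le: "p < nullity l \<Longrightarrow> block p \<le> l"
  unfolding block_eq_Least by (rule Least_le)

lemma block_le_m: "p < m \<Longrightarrow> block p \<le> m"
  by (rule block_le) (simp add: nullity_eq)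

lemma block_pos: "p < m \<Longrightarrow> 1 \<le> block p"
  using less_nullity_block[of p] by (cases "block p") auto

lemma nullity_block_pred_le: "p < m \<Longrightarrow> nullity (block p - 1) \<le> p"
proof (rule ccontr)
  assume "p < m" "\<not> nullity (block p - 1) \<le> p"
  then have "block p \<le> block p - 1" by (intro block_le) simp
  with block_pos[OF \<open>p < m\<close>] show False by simp
qed

lemma block_eqI:
  assumes "1 \<le> l" "nullity (l - 1) \<le> p" "p < nullity l"
  shows "block p = l"
  unfolding block_eq_Least
proof (rule Least_equality)
  show "p < nullity l" by fact
  fix l' assume "p < nullity l'"
  show "l \<le> l'"
  proof (rule ccontr)
    assume "\<not> l \<le> l'"
    then have "nullity l' \<le> nullity (l - 1)" by (intro nullity_mono) simp
    with assms \<open>p < nullity l'\<close> show False by simp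
  qed
qed

lemma block_mono: "p \<le> q \<Longrightarrow> q < m \<Longrightarrow> block p \<le> block q"
  using less_nullity_block[of q] by (intro block_le) simp

lemma Phi_eq: "Phi A lam = {(i, j). i < m \<and> i < j \<and> j < nullity (block i)}"
proof safe
  fix i j assume "(i, j) \<in> Phi A lam"
  then obtain l where l: "1 \<le> l" "nullity (l - 1) \<le> i" "i < nullity l" "i < j" "j < nullity l"
    unfolding Phi_def weyr_mu_eq_nullity by auto
  then have "block i = l" by (intro block_eqI)
  then show "i < m" "i < j" "j < nullity (block i)"
    using l nullity_le[of l] by auto
next
  fix i j assume ij: "i < m" "i < j" "j < nullity (block i)"
  show "(i, j) \<in> Phi A lam"
    unfolding Phi_def weyr_mu_eq_nullity weyr_eq
    using ij block_pos[OF ij(1)] nullity_block_pred_le[OF ij(1)] less_nullity_block[OF ij(1)]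
    by (intro CollectI exI[of _ "block i"]) auto
qed

lemma staircase_iff:
  "staircase A lam m S \<longleftrightarrow>
     S \<in> carrier_mat m m \<and> (\<forall>p<m. \<forall>q<m. block q \<le> block p \<longrightarrow> S $$ (p, q) = 0)"
  unfolding staircase_def block_def by auto

lemma ker_pow_iff: "x \<in> ker_pow l \<longleftrightarrow> x \<in> carrier_vec n \<and> (K ^\<^sub>m l) *\<^sub>v x = 0\<^sub>v n"
  unfolding ker_pow_def using mat_kernel[OF K_pow_carrier] by simp

lemma ker_pow_carrier: "x \<in> ker_pow l \<Longrightarrow> x \<in> carrier_vec n"
  by (simp add: ker_pow_iff)

lemma ker_pow_Suc: "x \<in> ker_pow (Suc l) \<longleftrightarrow> x \<in> carrier_vec n \<and> K *\<^sub>v x \<in> ker_pow l"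
proof -
  have "x \<in> carrier_vec n \<Longrightarrow> (K ^\<^sub>m Suc l) *\<^sub>v x = (K ^\<^sub>m l) *\<^sub>v (K *\<^sub>v x)"
    using K_carrier by (simp add: assoc_mult_mat_vec[of _ n n _ n])
  then show ?thesis unfolding ker_pow_iff using K_carrier by auto
qed

lemma ker_pow_mono: "l \<le> l' \<Longrightarrow> x \<in> ker_pow l \<Longrightarrow> x \<in> ker_pow l'"
proof (induct l' arbitrary: l x)
  case 0
  then show ?case by simp
next
  case (Suc l')
  show ?case
  proof (cases l)
    case 0
    then have "x = 0\<^sub>v n"
      using Suc.prems by (auto simp: ker_pow_iff carrier_matD[OF K_carrier])
    have "M *\<^sub>v 0\<^sub>v n = 0\<^sub>v n" if "M \<in> carrier_mat n n" for M :: "complex mat"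
      using that by (intro eq_vecI) auto
    then have "K ^\<^sub>m Suc l' *\<^sub>v 0\<^sub>v n = 0\<^sub>v n"
      using K_pow_carrier by blast
    with \<open>x = 0\<^sub>v n\<close> show ?thesis by (simp add: ker_pow_iff)
  next
    case (Suc l0)
    with Suc.prems Suc.hyps[of l0 "K *\<^sub>v x"] show ?thesis by (simp add: ker_pow_Suc)
  qed
qed

end

section \<open>Good pairs\<close>

context weyr_eigenvalue
begin

definition bvec :: "(nat \<times> nat \<Rightarrow> complex) \<Rightarrow> nat \<Rightarrow> complex vec" where
  "bvec b j = Matrix.vec n (\<lambda>r. b (r, j))"

lemma bvec_carrier [simp]: "bvec b j \<in> carrier_vec n"
  unfolding bvec_def by simp

lemma good_pair_iff:
  "good_pair A lam m b U S \<longleftrightarrow>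
     U \<in> carrier_mat n m \<and> mat_adjoint U * U = 1\<^sub>m m \<and> staircase A lam m S \<and>
     A * U - U * (lam \<cdot>\<^sub>m 1\<^sub>m m + S) = 0\<^sub>m n m \<and>
     (\<forall>i j. i < m \<and> i < j \<and> j < nullity (block i) \<longrightarrow> conjugate (col U i) \<bullet> bvec b j = 0)"
  unfolding good_pair_def Phi_eq bvec_def using A by auto

lemma good_pair_carriers:
  assumes "good_pair A lam m b U S"
  shows "U \<in> carrier_mat n m" "\<And>i. i < m \<Longrightarrow> col U i \<in> carrier_vec n"
  using assms unfolding good_pair_iff by auto

lemma good_pair_Phi:
  assumes "good_pair A lam m b U S" "i < m" "i < j" "j < nullity (block i)"
  shows "conjugate (col U i) \<bullet> bvec b j = 0"
  using assms unfolding good_pair_iff by blast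

lemma good_pair_orthonormal:
  assumes "good_pair A lam m b U S" "i < m" "j < m"
  shows "conjugate (col U i) \<bullet> col U j = (if i = j then 1 else 0)"
  using assms mat_adjoint_mult_eq_one_col unfolding good_pair_iff by blast

lemma index_eigen_residual:
  fixes U S :: "complex mat"
  assumes U: "U \<in> carrier_mat n m" and S: "S \<in> carrier_mat m m" and r: "r < n" and q: "q < m"
  shows "(A * U - U * (lam \<cdot>\<^sub>m 1\<^sub>m m + S)) $$ (r, q)
    = (K *\<^sub>v col U q) $ r - vec_lincomb n m (\<lambda>p. S $$ (p, q)) (col U) $ r"
proof -
  have "(U * (lam \<cdot>\<^sub>m 1\<^sub>m m + S)) $$ (r, q) = (\<Sum>p<m. U $$ (r, p) * (lam \<cdot>\<^sub>m 1\<^sub>m m + S) $$ (p, q))"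
    by (rule index_mult_mat_sum[OF U _ r q]) (use S in simp)
  also have "\<dots> = (\<Sum>p<m. (if p = q then lam * U $$ (r, q) else 0) + U $$ (r, p) * S $$ (p, q))"
    using S q by (intro sum.cong) (auto simp: distrib_left)
  also have "\<dots> = lam * U $$ (r, q) + vec_lincomb n m (\<lambda>p. S $$ (p, q)) (col U) $ r"
    using q r U by (simp add: sum.distrib mult.commute)
  finally have US: "(U * (lam \<cdot>\<^sub>m 1\<^sub>m m + S)) $$ (r, q)
      = lam * U $$ (r, q) + vec_lincomb n m (\<lambda>p. S $$ (p, q)) (col U) $ r" .
  have "(K *\<^sub>v col U q) $ r = (\<Sum>j<n. K $$ (r, j) * col U q $ j)"
    by (rule index_mult_mat_vec_sum[OF K_carrier _ r]) (use U q in simp)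
  also have "\<dots> = (\<Sum>j<n. A $$ (r, j) * U $$ (j, q) - (if j = r then lam * U $$ (r, q) else 0))"
    using A U q r by (intro sum.cong) (auto simp: K_def left_diff_distrib)
  also have "\<dots> = (A * U) $$ (r, q) - lam * U $$ (r, q)"
    using r by (simp add: sum_subtractf index_mult_mat_sum[OF A U r q])
  finally show ?thesis
    using A U S r q US by simp
qed

lemma eigen_eq_iff_cols:
  fixes U S :: "complex mat"
  assumes U: "U \<in> carrier_mat n m" and S: "S \<in> carrier_mat m m"
  shows "A * U - U * (lam \<cdot>\<^sub>m 1\<^sub>m m + S) = 0\<^sub>m n m \<longleftrightarrow>
    (\<forall>q<m. K *\<^sub>v col U q = vec_lincomb n m (\<lambda>p. S $$ (p, q)) (col U))"
proof
  assume eq: "A * U - U * (lam \<cdot>\<^sub>m 1\<^sub>m m + S) = 0\<^sub>m n m"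
  show "\<forall>q<m. K *\<^sub>v col U q = vec_lincomb n m (\<lambda>p. S $$ (p, q)) (col U)"
  proof (intro allI impI eq_vecI)
    fix q r assume "q < m" "r < dim_vec (vec_lincomb n m (\<lambda>p. S $$ (p, q)) (col U))"
    then show "(K *\<^sub>v col U q) $ r = vec_lincomb n m (\<lambda>p. S $$ (p, q)) (col U) $ r"
      using index_eigen_residual[OF U S, of r q] eq by simp
  qed (use K_carrier in simp)
next
  assume "\<forall>q<m. K *\<^sub>v col U q = vec_lincomb n m (\<lambda>p. S $$ (p, q)) (col U)"
  then show "A * U - U * (lam \<cdot>\<^sub>m 1\<^sub>m m + S) = 0\<^sub>m n m"
    using index_eigen_residual[OF U S] A U S by (intro eq_matI) auto
qed

lemma ker_pow_vec_lincomb: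
  assumes u: "\<And>i. i < k \<Longrightarrow> u i \<in> carrier_vec n"
    and c: "\<And>i. i < k \<Longrightarrow> c i \<noteq> 0 \<Longrightarrow> u i \<in> ker_pow l"
  shows "vec_lincomb n k c u \<in> ker_pow l"
proof -
  have "K ^\<^sub>m l *\<^sub>v vec_lincomb n k c u = vec_lincomb n k c (\<lambda>i. K ^\<^sub>m l *\<^sub>v u i)"
    by (rule mult_mat_vec_lincomb[OF K_pow_carrier u])
  also have "\<dots> = 0\<^sub>v n"
  proof (rule eq_vecI)
    fix r assume "r < dim_vec (0\<^sub>v n :: complex vec)"
    then have r: "r < n" by simp
    have "c i * (K ^\<^sub>m l *\<^sub>v u i) $ r = 0" if "i < k" for i
      using c[OF that] r by (cases "c i = 0") (auto simp: ker_pow_iff)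
    then show "vec_lincomb n k c (\<lambda>i. K ^\<^sub>m l *\<^sub>v u i) $ r = 0\<^sub>v n $ r"
      using r by (auto intro!: sum.neutral)
  qed simp
  finally show ?thesis by (simp add: ker_pow_iff)
qed

lemma orthonormal_ker_pow_expansion:
  fixes u :: "nat \<Rightarrow> complex vec"
  assumes u: "\<And>i. i < m \<Longrightarrow> u i \<in> ker_pow (block i)"
    and on: "\<And>i j. i < m \<Longrightarrow> j < m \<Longrightarrow> conjugate (u i) \<bullet> u j = (if i = j then 1 else 0)"
    and x: "x \<in> ker_pow l"
  shows "x = vec_lincomb n (nullity l) (\<lambda>i. conjugate (u i) \<bullet> x) u"
proof (rule orthonormal_kernel_expansion[OF K_pow_carrier])
  fix i assume i: "i < nullity l"
  then have "u i \<in> ker_pow (block i)" using u nullity_le[of l] by simp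
  then show "u i \<in> mat_kernel (K ^\<^sub>m l)"
    using ker_pow_mono[OF block_le[OF i]] unfolding ker_pow_def by blast
next
  fix i j assume "i < nullity l" "j < nullity l"
  then show "conjugate (u i) \<bullet> u j = (if i = j then 1 else 0)"
    using on nullity_le[of l] by simp
qed (use x in \<open>simp_all add: nullity_def ker_pow_def\<close>)

lemma orthonormal_ker_pow_orth:
  assumes u: "\<And>i. i < m \<Longrightarrow> u i \<in> ker_pow (block i)"
    and on: "\<And>i j. i < m \<Longrightarrow> j < m \<Longrightarrow> conjugate (u i) \<bullet> u j = (if i = j then 1 else 0)"
    and x: "x \<in> ker_pow l" and k: "nullity l \<le> k" "k < m"
  shows "conjugate (u k) \<bullet> x = 0"
proof -
  have uc: "\<And>i. i < m \<Longrightarrow> u i \<in> carrier_vec n" using u ker_pow_carrier by blast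
  have "conjugate (u k) \<bullet> x = conjugate (u k) \<bullet> vec_lincomb n (nullity l) (\<lambda>i. conjugate (u i) \<bullet> x) u"
    using orthonormal_ker_pow_expansion[OF u on x] by (rule arg_cong)
  also have "\<dots> = (\<Sum>i<nullity l. (conjugate (u i) \<bullet> x) * (conjugate (u k) \<bullet> u i))"
    by (rule scalar_prod_vec_lincomb) (use uc k nullity_le[of l] in auto)
  also have "\<dots> = 0" using on k nullity_le[of l] by (intro sum.neutral) auto
  finally show ?thesis .
qed

lemma orthonormal_ker_pow_parseval:
  fixes u :: "nat \<Rightarrow> complex vec"
  assumes u: "\<And>i. i < m \<Longrightarrow> u i \<in> ker_pow (block i)"
    and on: "\<And>i j. i < m \<Longrightarrow> j < m \<Longrightarrow> conjugate (u i) \<bullet> u j = (if i = j then 1 else 0)"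
    and x: "x \<in> ker_pow l" and w: "w \<in> carrier_vec n"
  shows "conjugate x \<bullet> w = (\<Sum>i<nullity l. (conjugate x \<bullet> u i) * (conjugate (u i) \<bullet> w))"
proof -
  have uc: "\<And>i. i < m \<Longrightarrow> u i \<in> carrier_vec n" using u ker_pow_carrier by blast
  have "conjugate x \<bullet> w = conjugate (vec_lincomb n (nullity l) (\<lambda>i. conjugate (u i) \<bullet> x) u) \<bullet> w"
    using orthonormal_ker_pow_expansion[OF u on x] by (rule arg_cong)
  also have "\<dots> = (\<Sum>i<nullity l. cnj (conjugate (u i) \<bullet> x) * (conjugate (u i) \<bullet> w))"
    by (rule vec_lincomb_scalar_prod[OF w]) (use uc nullity_le[of l] in auto)
  also have "\<dots> = (\<Sum>i<nullity l. (conjugate x \<bullet> u i) * (conjugate (u i) \<bullet> w))"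
    using cnj_conjugate_scalar_prod[OF uc ker_pow_carrier[OF x]] nullity_le[of l]
    by (intro sum.cong) auto
  finally show ?thesis .
qed

lemma good_pair_col_ker_pow:
  assumes gp: "good_pair A lam m b U S" and q: "q < m"
  shows "col U q \<in> ker_pow (block q)"
  using q
proof (induct q rule: less_induct)
  case (less q)
  from gp have U: "U \<in> carrier_mat n m" and S: "S \<in> carrier_mat m m"
    and eq: "A * U - U * (lam \<cdot>\<^sub>m 1\<^sub>m m + S) = 0\<^sub>m n m"
    and st: "\<forall>p<m. \<forall>q<m. block q \<le> block p \<longrightarrow> S $$ (p, q) = 0"
    unfolding good_pair_iff staircase_iff by auto
  have "vec_lincomb n m (\<lambda>p. S $$ (p, q)) (col U) \<in> ker_pow (block q - 1)"
  proof (rule ker_pow_vec_lincomb)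
    fix p assume p: "p < m" and "S $$ (p, q) \<noteq> 0"
    then have "block p < block q" using st less(2) by force
    then have "p < q" using block_mono[of q p] p by (cases "p < q") auto
    then show "col U p \<in> ker_pow (block q - 1)"
      using less(1)[OF _ p] ker_pow_mono[of "block p" "block q - 1"] \<open>block p < block q\<close> by simp
  qed (use U in simp)
  moreover have "K *\<^sub>v col U q = vec_lincomb n m (\<lambda>p. S $$ (p, q)) (col U)"
    using eq eigen_eq_iff_cols[OF U S] less(2) by blast
  ultimately have "col U q \<in> ker_pow (Suc (block q - 1))"
    using ker_pow_Suc U less(2) by simp
  then show ?case using block_pos[OF less(2)] by simp
qed

lemma good_pair_S_eq:
  assumes gp: "good_pair A lam m b U S"
  shows "S = mat_adjoint U * (A - lam \<cdot>\<^sub>m 1\<^sub>m n) * U"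
proof -
  from gp have U: "U \<in> carrier_mat n m" and S: "S \<in> carrier_mat m m"
    and UU: "mat_adjoint U * U = 1\<^sub>m m"
    and eq: "A * U - U * (lam \<cdot>\<^sub>m 1\<^sub>m m + S) = 0\<^sub>m n m"
    unfolding good_pair_iff staircase_iff by auto
  have "mat_adjoint U * (A - lam \<cdot>\<^sub>m 1\<^sub>m n) * U = mat_adjoint U * (K * U)"
    unfolding K_def[symmetric] using mat_adjoint_carrier[OF U] K_carrier U by simp
  also have "\<dots> = S"
  proof (rule eq_matI)
    fix p q assume "p < dim_row S" "q < dim_col S"
    then have p: "p < m" and q: "q < m" using S by auto
    have "(mat_adjoint U * (K * U)) $$ (p, q) = conjugate (col U p) \<bullet> col (K * U) q"
      by (rule index_mat_adjoint_mult[OF U _ p q]) (use K_carrier U in simp)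
    also have "col (K * U) q = K *\<^sub>v col U q"
      using K_carrier U q by (auto intro!: eq_vecI)
    also have "\<dots> = vec_lincomb n m (\<lambda>p. S $$ (p, q)) (col U)"
      using eq eigen_eq_iff_cols[OF U S] q by blast
    also have "conjugate (col U p) \<bullet> \<dots> = S $$ (p, q)"
      using vec_lincomb_orthonormal_coeff[OF _ mat_adjoint_mult_eq_one_col[OF U UU] p] U by simp
    finally show "(mat_adjoint U * (K * U)) $$ (p, q) = S $$ (p, q)" .
  qed (use mat_adjoint_carrier[OF U] K_carrier U S in auto)
  finally show ?thesis by simp
qed

end

section \<open>Existence of good pairs\<close>

context weyr_eigenvalue
begin

definition admissible :: "(nat \<times> nat \<Rightarrow> complex) \<Rightarrow> nat \<Rightarrow> (nat \<Rightarrow> complex vec) \<Rightarrow> bool" where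
  "admissible b p u \<longleftrightarrow> (\<forall>i<p. u i \<in> ker_pow (block i)) \<and>
     (\<forall>i<p. \<forall>j<p. conjugate (u i) \<bullet> u j = (if i = j then 1 else 0)) \<and>
     (\<forall>i<p. \<forall>j. i < j \<and> j < nullity (block i) \<longrightarrow> conjugate (u i) \<bullet> bvec b j = 0)"

lemma admissible_next_vector:
  assumes adm: "admissible b p u" and p: "p < m"
  obtains w where "w \<in> ker_pow (block p)" "conjugate w \<bullet> w = 1"
    "\<And>i. i < p \<Longrightarrow> conjugate (u i) \<bullet> w = 0"
    "\<And>j. p < j \<Longrightarrow> j < nullity (block p) \<Longrightarrow> conjugate w \<bullet> bvec b j = 0"
proof -
  let ?e = "nullity (block p)"
  have pe: "p < ?e" by (rule less_nullity_block[OF p])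
  txt \<open>The \<open>?e - 1\<close> constraints on \<open>w\<close> are fewer than \<open>dim ker (A - \<lambda>I)^(block p) = ?e\<close>.\<close>
  define v where "v i = (if i < p then u i else bvec b (i + 1))" for i
  have "v i \<in> carrier_vec n" if "i < ?e - 1" for i
    using adm ker_pow_carrier that unfolding v_def admissible_def by auto
  moreover have "?e - 1 < kernel_dim (K ^\<^sub>m block p)"
    using pe by (simp add: nullity_def)
  ultimately obtain x where x: "x \<in> ker_pow (block p)" "x \<noteq> 0\<^sub>v n"
    and xv: "\<And>i. i < ?e - 1 \<Longrightarrow> conjugate (v i) \<bullet> x = 0"
    using mat_kernel_orthogonal_nonzero[OF K_pow_carrier] unfolding ker_pow_def by blast
  have xc: "x \<in> carrier_vec n" using ker_pow_carrier[OF x(1)] .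
  obtain c where c: "conjugate (c \<cdot>\<^sub>v x) \<bullet> (c \<cdot>\<^sub>v x) = 1"
    using exists_unit_multiple[OF xc x(2)] by blast
  show ?thesis
  proof (rule that[of "c \<cdot>\<^sub>v x"])
    show "c \<cdot>\<^sub>v x \<in> ker_pow (block p)"
      using mat_kernel_smult[OF K_pow_carrier] x(1) unfolding ker_pow_def by blast
    show "conjugate (c \<cdot>\<^sub>v x) \<bullet> (c \<cdot>\<^sub>v x) = 1" by (fact c)
  next
    fix i assume "i < p"
    then have "conjugate (u i) \<bullet> x = 0" using xv[of i] pe by (simp add: v_def)
    moreover have "u i \<in> carrier_vec n"
      using adm \<open>i < p\<close> ker_pow_carrier unfolding admissible_def by blast
    ultimately show "conjugate (u i) \<bullet> (c \<cdot>\<^sub>v x) = 0" using xc by simp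
  next
    fix j assume "p < j" "j < ?e"
    then have "\<not> j - 1 < p" "j - 1 + 1 = j" "j - 1 < ?e - 1" by auto
    then have "conjugate (bvec b j) \<bullet> x = 0" using xv[of "j - 1"] by (simp add: v_def)
    then have "conjugate x \<bullet> bvec b j = 0"
      using cnj_conjugate_scalar_prod[OF bvec_carrier xc, of b j] by simp
    then show "conjugate (c \<cdot>\<^sub>v x) \<bullet> bvec b j = 0"
      unfolding conjugate_smult_vec using xc by (subst smult_scalar_prod_distrib[of _ n]) auto
  qed
qed

lemma admissible_extend:
  assumes adm: "admissible b p u" and p: "p < m"
  shows "\<exists>w. admissible b (Suc p) (u(p := w))"
proof -
  obtain w where w: "w \<in> ker_pow (block p)" "conjugate w \<bullet> w = 1"
    and wu: "\<And>i. i < p \<Longrightarrow> conjugate (u i) \<bullet> w = 0"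
    and wb: "\<And>j. p < j \<Longrightarrow> j < nullity (block p) \<Longrightarrow> conjugate w \<bullet> bvec b j = 0"
    using admissible_next_vector[OF adm p] by blast
  have uw: "conjugate w \<bullet> u i = 0" if "i < p" for i
    using cnj_conjugate_scalar_prod[of "u i" n w] wu[OF that] adm that ker_pow_carrier w(1)
    unfolding admissible_def by auto
  have "admissible b (Suc p) (u(p := w))"
    using adm w wu uw wb unfolding admissible_def by (auto simp: less_Suc_eq)
  then show ?thesis by blast
qed

lemma admissible_exists: "p \<le> m \<Longrightarrow> \<exists>u. admissible b p u"
proof (induct p)
  case 0
  show ?case by (simp add: admissible_def)
next
  case (Suc p)
  then show ?case using admissible_extend by fastforce
qed

lemma admissible_K_expansion:
  assumes adm: "admissible b m u" and q: "q < m"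
  shows "K *\<^sub>v u q = vec_lincomb n (nullity (block q - 1)) (\<lambda>i. conjugate (u i) \<bullet> (K *\<^sub>v u q)) u"
proof (rule orthonormal_ker_pow_expansion)
  show "K *\<^sub>v u q \<in> ker_pow (block q - 1)"
    using adm q block_pos[OF q] ker_pow_Suc[of "u q" "block q - 1"] unfolding admissible_def by simp
qed (use adm in \<open>auto simp: admissible_def\<close>)

lemma admissible_K_coeff_zero:
  assumes adm: "admissible b m u" and p: "p < m" and q: "q < m" and pq: "block q \<le> block p"
  shows "conjugate (u p) \<bullet> (K *\<^sub>v u q) = 0"
proof -
  have uc: "\<And>i. i < m \<Longrightarrow> u i \<in> carrier_vec n"
    using adm ker_pow_carrier unfolding admissible_def by blast
  have on: "\<And>i j. i < m \<Longrightarrow> j < m \<Longrightarrow> conjugate (u i) \<bullet> u j = (if i = j then 1 else 0)"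
    using adm unfolding admissible_def by blast
  have le: "nullity (block q - 1) \<le> p"
    using nullity_mono[OF diff_le_mono[OF pq], of 1] nullity_block_pred_le[OF p] by simp
  have "conjugate (u p) \<bullet> (K *\<^sub>v u q) = (\<Sum>i<nullity (block q - 1).
      (conjugate (u i) \<bullet> (K *\<^sub>v u q)) * (conjugate (u p) \<bullet> u i))"
    by (subst admissible_K_expansion[OF adm q], rule scalar_prod_vec_lincomb)
      (use uc p nullity_le[of "block q - 1"] in auto)
  also have "\<dots> = 0"
    using on p le nullity_le by (intro sum.neutral) auto
  finally show ?thesis .
qed

lemma admissible_imp_good_pair:
  assumes adm: "admissible b m u"
  shows "\<exists>U S. good_pair A lam m b U S"
proof -
  have uN: "\<And>i. i < m \<Longrightarrow> u i \<in> ker_pow (block i)"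
    and on: "\<And>i j. i < m \<Longrightarrow> j < m \<Longrightarrow> conjugate (u i) \<bullet> u j = (if i = j then 1 else 0)"
    using adm unfolding admissible_def by auto
  have uc: "\<And>i. i < m \<Longrightarrow> u i \<in> carrier_vec n" using uN ker_pow_carrier by blast
  define U where "U = Matrix.mat n m (\<lambda>(r, i). u i $ r)"
  have U: "U \<in> carrier_mat n m" unfolding U_def by simp
  have colU: "col U i = u i" if "i < m" for i
    using uc[OF that] that unfolding U_def by (intro eq_vecI) auto
  define S where "S = Matrix.mat m m (\<lambda>(p, q). conjugate (u p) \<bullet> (K *\<^sub>v u q))"
  have S: "S \<in> carrier_mat m m" unfolding S_def by simp
  have UU: "mat_adjoint U * U = 1\<^sub>m m"
    using index_mat_adjoint_mult[OF U U] colU on mat_adjoint_carrier[OF U] U by (intro eq_matI) auto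
  have "staircase A lam m S"
    unfolding staircase_iff using S admissible_K_coeff_zero[OF adm] by (auto simp: S_def)
  moreover have "K *\<^sub>v col U q = vec_lincomb n m (\<lambda>p. S $$ (p, q)) (col U)" if q: "q < m" for q
  proof -
    have "K *\<^sub>v u q \<in> ker_pow m"
      using adm q ker_pow_Suc[of "u q" "block q - 1"] block_pos[OF q] block_le_m[OF q]
        ker_pow_mono[of "block q - 1" m] unfolding admissible_def by simp
    then have "K *\<^sub>v u q = vec_lincomb n m (\<lambda>i. conjugate (u i) \<bullet> (K *\<^sub>v u q)) u"
      using orthonormal_ker_pow_expansion[OF uN on] nullity_eq[of m] by fastforce
    also have "\<dots> = vec_lincomb n m (\<lambda>p. S $$ (p, q)) (col U)"
      unfolding vec_lincomb_def using q by (intro arg_cong[where f = "Matrix.vec n"] ext sum.cong)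
        (auto simp: S_def colU)
    finally show ?thesis using colU q by simp
  qed
  ultimately have "good_pair A lam m b U S"
    using adm U UU S eigen_eq_iff_cols[OF U S] colU
    unfolding good_pair_iff admissible_def by auto
  then show ?thesis by blast
qed

lemma good_pair_exists: "\<exists>U S. good_pair A lam m b U S"
  using admissible_exists[of m b] admissible_imp_good_pair by blast

end

section \<open>Uniqueness for generic right-hand sides\<close>

context weyr_eigenvalue
begin

text \<open>A reference frame: any good pair for \<open>b = 0\<close>, for which the condition on \<open>\<Phi>\<close> is void.\<close>
definition ref_frame :: "complex mat" where
  "ref_frame = (SOME Z. \<exists>S. good_pair A lam m (\<lambda>_. 0) Z S)"

lemma ref_frame_good_pair: "\<exists>S. good_pair A lam m (\<lambda>_. 0) ref_frame S"
  unfolding ref_frame_def by (rule someI_ex) (rule good_pair_exists)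

lemma ref_frame_carrier: "ref_frame \<in> carrier_mat n m"
  using ref_frame_good_pair unfolding good_pair_iff by auto

definition block_dim :: "nat \<Rightarrow> nat" where
  "block_dim l = nullity l - nullity (l - 1) - 1"

definition gram_block :: "(nat \<Rightarrow> complex vec) \<Rightarrow> (nat \<Rightarrow> complex vec) \<Rightarrow> nat \<Rightarrow> complex mat" where
  "gram_block u v l = Matrix.mat (block_dim l) (block_dim l)
     (\<lambda>(a, c). conjugate (u (nullity (l - 1) + 1 + a)) \<bullet> v (nullity (l - 1) + 1 + c))"

definition generic :: "(nat \<times> nat \<Rightarrow> complex) \<Rightarrow> complex" where
  "generic b = (\<Prod>l\<in>{1..m}. det (gram_block (col ref_frame) (bvec b) l))"

lemma gram_block_carrier: "gram_block u v l \<in> carrier_mat (block_dim l) (block_dim l)"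
  unfolding gram_block_def by simp

lemma block_dim_less_nullity: "a < block_dim l \<Longrightarrow> nullity (l - 1) + 1 + a < nullity l"
  unfolding block_dim_def by simp

lemma block_dim_less: "a < block_dim l \<Longrightarrow> nullity (l - 1) + 1 + a < m"
  using block_dim_less_nullity nullity_le order.strict_trans2 by blast

lemma gram_block_head_term_zero:
  assumes gp: "good_pair A lam m b U S" and l: "1 \<le> l"
    and k: "nullity (l - 1) \<le> k" "k < nullity l" and j: "nullity (l - 1) < j" "j < nullity l"
    and i: "i \<le> nullity (l - 1)"
  shows "(conjugate (col ref_frame k) \<bullet> col U i) * (conjugate (col U i) \<bullet> bvec b j) = 0"
proof (cases "i = nullity (l - 1)")
  case True
  have "block i = l" using True l j by (intro block_eqI) auto
  then show ?thesis
    using good_pair_Phi[OF gp, of i j] True j nullity_le[of l] by simp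
next
  case False
  obtain SZ where gZ: "good_pair A lam m (\<lambda>_. 0) ref_frame SZ" using ref_frame_good_pair by blast
  have "col U i \<in> ker_pow (l - 1)"
    using good_pair_col_ker_pow[OF gp, of i] ker_pow_mono[OF block_le[of i "l - 1"]] i False k
      nullity_le[of l] by simp
  then have "conjugate (col ref_frame k) \<bullet> col U i = 0"
    using k nullity_le[of l] by (intro orthonormal_ker_pow_orth[OF good_pair_col_ker_pow[OF gZ]
          good_pair_orthonormal[OF gZ]]) auto
  then show ?thesis by simp
qed

lemma gram_block_factor:
  assumes gp: "good_pair A lam m b U S" and l: "1 \<le> l"
  shows "gram_block (col ref_frame) (bvec b) l
    = gram_block (col ref_frame) (col U) l * gram_block (col U) (bvec b) l"
    (is "?C = ?Y * ?T")
proof (rule eq_matI)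
  fix a c assume "a < dim_row (?Y * ?T)" "c < dim_col (?Y * ?T)"
  then have a: "a < block_dim l" and c: "c < block_dim l" by (auto simp: gram_block_def)
  define s where "s = nullity (l - 1)"
  define d where "d = block_dim l"
  define k where "k = s + 1 + a"
  define j where "j = s + 1 + c"
  have e: "nullity l = s + 1 + d" using a unfolding s_def d_def block_dim_def by simp
  have k: "s \<le> k" "k < nullity l" and j: "s < j" "j < nullity l"
    using a c e unfolding k_def j_def d_def by auto
  obtain SZ where gZ: "good_pair A lam m (\<lambda>_. 0) ref_frame SZ" using ref_frame_good_pair by blast
  let ?u = "col U" and ?z = "col ref_frame"
  let ?f = "\<lambda>i. (conjugate (?z k) \<bullet> ?u i) * (conjugate (?u i) \<bullet> bvec b j)"
  have uN: "\<And>i. i < m \<Longrightarrow> ?u i \<in> ker_pow (block i)"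
    using good_pair_col_ker_pow[OF gp] .
  have uon: "\<And>i j. i < m \<Longrightarrow> j < m \<Longrightarrow> conjugate (?u i) \<bullet> ?u j = (if i = j then 1 else 0)"
    using good_pair_orthonormal[OF gp] .
  have "block k = l" using l k unfolding s_def by (intro block_eqI) auto
  then have zk: "?z k \<in> ker_pow l"
    using good_pair_col_ker_pow[OF gZ, of k] k nullity_le[of l] by simp
  have "conjugate (?z k) \<bullet> bvec b j = (\<Sum>i<nullity l. ?f i)"
    by (rule orthonormal_ker_pow_parseval[OF uN uon zk bvec_carrier])
  also have "\<dots> = (\<Sum>i<s + 1. ?f i) + (\<Sum>t<d. ?f (s + 1 + t))"
    unfolding e by (rule sum_lessThan_add_shift)
  also have "(\<Sum>i<s + 1. ?f i) = 0"
    using gram_block_head_term_zero[OF gp l] k j by (intro sum.neutral) (auto simp: s_def)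
  also have "(\<Sum>t<d. ?f (s + 1 + t)) = (\<Sum>t<d. ?Y $$ (a, t) * ?T $$ (t, c))"
    using a c by (intro sum.cong) (auto simp: gram_block_def k_def j_def s_def d_def)
  also have "\<dots> = (?Y * ?T) $$ (a, c)"
    using a c gram_block_carrier by (intro index_mult_mat_sum[symmetric]) (auto simp: d_def)
  finally show "?C $$ (a, c) = (?Y * ?T) $$ (a, c)"
    using a c by (simp add: gram_block_def k_def j_def s_def)
qed (auto simp: gram_block_def)

lemma gram_block_upper_zero:
  assumes gp: "good_pair A lam m b U S" and "1 \<le> l" "i < c" "c < block_dim l"
  shows "gram_block (col U) (bvec b) l $$ (i, c) = 0"
proof -
  have "block (nullity (l - 1) + 1 + i) = l"
    using assms block_dim_less_nullity[of c l] by (intro block_eqI) auto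
  then show ?thesis
    using good_pair_Phi[OF gp] assms block_dim_less[of c l] block_dim_less_nullity[of c l]
    by (simp add: gram_block_def)
qed

lemma generic_diag_nonzero:
  assumes gen: "generic b \<noteq> 0" and gp: "good_pair A lam m b U S"
    and j: "j < m" "nullity (block j - 1) < j"
  shows "conjugate (col U j) \<bullet> bvec b j \<noteq> 0"
proof
  assume zero: "conjugate (col U j) \<bullet> bvec b j = 0"
  define l where "l = block j"
  define t where "t = j - nullity (l - 1) - 1"
  have l: "1 \<le> l" "l \<le> m" using block_pos[OF j(1)] block_le_m[OF j(1)] by (auto simp: l_def)
  have t: "t < block_dim l" and jt: "j = nullity (l - 1) + 1 + t"
    using j less_nullity_block[OF j(1)] by (auto simp: t_def l_def block_dim_def)
  let ?T = "gram_block (col U) (bvec b) l"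
  have "det ?T = prod_list (diag_mat ?T)"
    by (rule det_lower_triangular[OF _ gram_block_carrier]) (use gram_block_upper_zero[OF gp l(1)] in auto)
  also have "\<dots> = (\<Prod>i = 0..<block_dim l. ?T $$ (i, i))"
    by (simp add: prod_list_diag_prod gram_block_def)
  also have "\<dots> = 0"
    using t jt zero by (intro prod_zero) (auto simp: gram_block_def intro!: bexI[of _ t])
  finally have "det (gram_block (col ref_frame) (bvec b) l) = 0"
    unfolding gram_block_factor[OF gp l(1)] det_mult[OF gram_block_carrier gram_block_carrier] by simp
  then have "generic b = 0"
    unfolding generic_def using l by (intro prod_zero) auto
  with gen show False by simp
qed

lemma poly_fun_generic: "poly_fun ({0..<n} \<times> {0..<m}) generic"
  unfolding generic_def
proof (intro poly_fun_prod)
  fix l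
  show "poly_fun ({0..<n} \<times> {0..<m}) (\<lambda>b. det (gram_block (col ref_frame) (bvec b) l))"
  proof (rule poly_fun_det)
    fix i j assume i: "i < block_dim l" and j: "j < block_dim l"
    let ?z = "col ref_frame (nullity (l - 1) + 1 + i)" and ?j = "nullity (l - 1) + 1 + j"
    have "gram_block (col ref_frame) (bvec b) l $$ (i, j) = conjugate ?z \<bullet> bvec b ?j" for b
      using i j by (simp add: gram_block_def)
    also have "conjugate ?z \<bullet> bvec b ?j = (\<Sum>r<n. cnj (?z $ r) * bvec b ?j $ r)" for b
      by (rule conjugate_scalar_prod_sum) (use ref_frame_carrier in auto)
    finally have "gram_block (col ref_frame) (bvec b) l $$ (i, j) = (\<Sum>r<n. cnj (?z $ r) * b (r, ?j))" for b
      by (simp add: bvec_def)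
    moreover have "poly_fun ({0..<n} \<times> {0..<m}) (\<lambda>b. \<Sum>r<n. cnj (?z $ r) * b (r, ?j))"
      using block_dim_less[OF j] by (intro poly_fun_sum poly_fun.intros) auto
    ultimately show "poly_fun ({0..<n} \<times> {0..<m}) (\<lambda>b. gram_block (col ref_frame) (bvec b) l $$ (i, j))"
      by simp
  qed (rule gram_block_carrier)
qed simp

lemma generic_ref_frame: "generic (\<lambda>p. ref_frame $$ p) = 1"
proof -
  obtain S where gp: "good_pair A lam m (\<lambda>_. 0) ref_frame S" using ref_frame_good_pair by blast
  have "bvec (\<lambda>p. ref_frame $$ p) j = col ref_frame j" if "j < m" for j
    using ref_frame_carrier that by (auto simp: bvec_def intro!: eq_vecI)
  then have "gram_block (col ref_frame) (bvec (\<lambda>p. ref_frame $$ p)) l = 1\<^sub>m (block_dim l)" for l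
    using good_pair_orthonormal[OF gp] block_dim_less by (intro eq_matI) (auto simp: gram_block_def)
  then show ?thesis by (simp add: generic_def)
qed

lemma AE_generic_nonzero: "AE b in PiM ({0..<n} \<times> {0..<m}) (\<lambda>_. lborel). generic b \<noteq> 0"
  by (rule poly_fun_AE_nonzero[OF _ poly_fun_generic, of "\<lambda>p. ref_frame $$ p"])
    (simp_all add: generic_ref_frame)

lemma good_pair_coeff_below_zero:
  assumes gp: "good_pair A lam m b U S" and gp': "good_pair A lam m b U' S'"
    and i: "i < k" "k < m" and par: "col U' i = \<alpha> \<cdot>\<^sub>v col U i"
  shows "conjugate (col U i) \<bullet> col U' k = 0"
proof -
  have "0 = conjugate (col U' i) \<bullet> col U' k"
    using good_pair_orthonormal[OF gp', of i k] i by simp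
  also have "\<dots> = cnj \<alpha> * (conjugate (col U i) \<bullet> col U' k)"
    unfolding par conjugate_smult_vec using good_pair_carriers(2)[OF gp] good_pair_carriers(2)[OF gp'] i
    by (subst smult_scalar_prod_distrib[of _ n]) auto
  finally have "cnj \<alpha> * (conjugate (col U i) \<bullet> col U' k) = 0" by simp
  moreover have "\<alpha> \<noteq> 0"
    using good_pair_orthonormal[OF gp', of i i] i par by auto
  ultimately show ?thesis by simp
qed

lemma good_pair_coeff_above_zero:
  assumes diag: "\<And>j. j < m \<Longrightarrow> nullity (block j - 1) < j \<Longrightarrow> conjugate (col U j) \<bullet> bvec b j \<noteq> 0"
    and gp: "good_pair A lam m b U S" and gp': "good_pair A lam m b U' S'" and k: "k < m"
    and below: "\<And>i. i < k \<Longrightarrow> conjugate (col U i) \<bullet> col U' k = 0"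
  shows "k < i \<Longrightarrow> i < nullity (block k) \<Longrightarrow> conjugate (col U i) \<bullet> col U' k = 0"
proof (induct "nullity (block k) - i" arbitrary: i rule: less_induct)
  case (less i)
  let ?u = "col U" and ?a = "\<lambda>i. conjugate (col U i) \<bullet> col U' k"
  define e where "e = nullity (block k)"
  have em: "e \<le> m" unfolding e_def by (rule nullity_le)
  have ki: "k < i" "i < e" using less by (auto simp: e_def)
  have block_in: "block i' = block k" if "k \<le> i'" "i' < e" for i'
    using that block_pos[OF k] nullity_block_pred_le[OF k] unfolding e_def by (intro block_eqI) auto
  have uN: "\<And>i. i < m \<Longrightarrow> ?u i \<in> ker_pow (block i)"
    using good_pair_col_ker_pow[OF gp] .
  have uon: "\<And>i j. i < m \<Longrightarrow> j < m \<Longrightarrow> conjugate (?u i) \<bullet> ?u j = (if i = j then 1 else 0)"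
    using good_pair_orthonormal[OF gp] .
  have "col U' k = vec_lincomb n e ?a ?u"
    unfolding e_def by (rule orthonormal_ker_pow_expansion[OF uN uon good_pair_col_ker_pow[OF gp' k]])
  then have "conjugate (col U' k) \<bullet> bvec b i = conjugate (vec_lincomb n e ?a ?u) \<bullet> bvec b i"
    by (rule arg_cong)
  also have "\<dots> = (\<Sum>i'<e. cnj (?a i') * (conjugate (?u i') \<bullet> bvec b i))"
    by (rule vec_lincomb_scalar_prod) (use good_pair_carriers(2)[OF gp] em in auto)
  also have "\<dots> = cnj (?a i) * (conjugate (?u i) \<bullet> bvec b i)"
  proof (subst sum.remove[of _ i], simp_all add: ki)
    have "cnj (?a i') * (conjugate (?u i') \<bullet> bvec b i) = 0" if "i' < e" "i' \<noteq> i" for i'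
    proof -
      consider "i' < k" | "k \<le> i'" "i' < i" | "i < i'" using \<open>i' \<noteq> i\<close> by fastforce
      then show ?thesis
      proof cases
        case 2
        then show ?thesis using good_pair_Phi[OF gp, of i' i] block_in[of i'] ki em \<open>i' < e\<close>
          by (simp add: e_def)
      qed (use below less(1)[of i'] \<open>i' < e\<close> ki in \<open>auto simp: e_def\<close>)
    qed
    then show "(\<Sum>i'\<in>{..<e} - {i}. cnj (?a i') * (conjugate (?u i') \<bullet> bvec b i)) = 0"
      by (intro sum.neutral) auto
  qed
  finally have "cnj (?a i) * (conjugate (?u i) \<bullet> bvec b i) = 0"
    using good_pair_Phi[OF gp' k ki(1)] ki by (simp add: e_def)
  moreover have "conjugate (?u i) \<bullet> bvec b i \<noteq> 0"
    using diag[of i] ki em nullity_block_pred_le[OF k] block_in[of i] by simp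
  ultimately show ?case by simp
qed

lemma good_pair_col_parallel:
  assumes diag: "\<And>j. j < m \<Longrightarrow> nullity (block j - 1) < j \<Longrightarrow> conjugate (col U j) \<bullet> bvec b j \<noteq> 0"
    and gp: "good_pair A lam m b U S" and gp': "good_pair A lam m b U' S'"
  shows "k < m \<Longrightarrow> col U' k = (conjugate (col U k) \<bullet> col U' k) \<cdot>\<^sub>v col U k"
proof (induct k rule: less_induct)
  case (less k)
  let ?u = "col U" and ?a = "\<lambda>i. conjugate (col U i) \<bullet> col U' k"
  have below: "?a i = 0" if "i < k" for i
    using good_pair_coeff_below_zero[OF gp gp' that less(2) less(1)[OF that]] that less(2) by simp
  have uN: "\<And>i. i < m \<Longrightarrow> ?u i \<in> ker_pow (block i)"
    using good_pair_col_ker_pow[OF gp] .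
  have uon: "\<And>i j. i < m \<Longrightarrow> j < m \<Longrightarrow> conjugate (?u i) \<bullet> ?u j = (if i = j then 1 else 0)"
    using good_pair_orthonormal[OF gp] .
  have "col U' k = vec_lincomb n (nullity (block k)) ?a ?u"
    by (rule orthonormal_ker_pow_expansion[OF uN uon good_pair_col_ker_pow[OF gp' less(2)]])
  also have "\<dots> = ?a k \<cdot>\<^sub>v ?u k"
  proof (rule vec_lincomb_single)
    fix i assume "i < nullity (block k)" "i \<noteq> k"
    then show "?a i = 0"
      using below good_pair_coeff_above_zero[OF diag gp gp' less(2) below] by (cases "i < k") auto
  qed (use less_nullity_block[OF less(2)] good_pair_carriers(2)[OF gp less(2)] in auto)
  finally show ?case .
qed

lemma good_pair_unique_up_to_phases:
  assumes gen: "generic b \<noteq> 0" and gp: "good_pair A lam m b U S" and gp': "good_pair A lam m b U' S'"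
  shows "\<exists>\<alpha>. (\<forall>i<m. cmod (\<alpha> i) = 1) \<and> U' = U * mat_diag m \<alpha>"
proof -
  define \<alpha> where "\<alpha> k = conjugate (col U k) \<bullet> col U' k" for k
  have par: "col U' k = \<alpha> k \<cdot>\<^sub>v col U k" if "k < m" for k
    unfolding \<alpha>_def using good_pair_col_parallel[OF generic_diag_nonzero[OF gen gp] gp gp' that] .
  note U = good_pair_carriers[OF gp] and U' = good_pair_carriers[OF gp']
  have "cmod (\<alpha> i) = 1" if i: "i < m" for i
  proof (rule cmod_eq_1_if_cnj_mult_eq_1)
    have "1 = conjugate (col U' i) \<bullet> col U' i" using good_pair_orthonormal[OF gp' i i] by simp
    also have "\<dots> = cnj (\<alpha> i) * \<alpha> i * (conjugate (col U i) \<bullet> col U i)"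
      unfolding par[OF i] conjugate_smult_vec using U(2)[OF i] by (simp add: mult.assoc)
    also have "\<dots> = cnj (\<alpha> i) * \<alpha> i" using good_pair_orthonormal[OF gp i i] by simp
    finally show "cnj (\<alpha> i) * \<alpha> i = 1" by simp
  qed
  moreover have "U' = U * mat_diag m \<alpha>"
  proof (rule eq_matI)
    fix r k assume "r < dim_row (U * mat_diag m \<alpha>)" "k < dim_col (U * mat_diag m \<alpha>)"
    then have r: "r < n" and k: "k < m" using U by (auto simp: mat_diag_def)
    have "(U * mat_diag m \<alpha>) $$ (r, k) = (\<Sum>p<m. U $$ (r, p) * mat_diag m \<alpha> $$ (p, k))"
      by (rule index_mult_mat_sum[OF U(1) _ r k]) (simp add: mat_diag_def)
    also have "\<dots> = U $$ (r, k) * \<alpha> k"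
      using k by (simp add: mat_diag_def if_distrib cong: if_cong)
    also have "\<dots> = U' $$ (r, k)"
      using arg_cong[OF par[OF k], of "\<lambda>v. v $ r"] U(1) U'(1) r k by simp
    finally show "U' $$ (r, k) = (U * mat_diag m \<alpha>) $$ (r, k)" by simp
  qed (use U U' in \<open>auto simp: mat_diag_def\<close>)
  ultimately show ?thesis by blast
qed

end

theorem theorem1:
  fixes A :: "complex mat" and lam :: complex and n m :: nat
  assumes "A \<in> carrier_mat n n"
    and "eigenvalue A lam"
    and "m = Polynomial.order lam (char_poly A)"
  shows "AE b in PiM ({0..<n} \<times> {0..<m}) (\<lambda>_. (lborel :: complex measure)).
     \<exists>U S. good_pair A lam m b U S \<and>
       (\<forall>U' S'. good_pair A lam m b U' S' \<longrightarrow>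
          S' = mat_adjoint U' * (A - lam \<cdot>\<^sub>m 1\<^sub>m n) * U' \<and>
          (\<exists>\<alpha>. (\<forall>i<m. cmod (\<alpha> i) = 1) \<and> U' = U * mat_diag m \<alpha>))"
proof -
  interpret weyr_eigenvalue A n lam m
    using assms(1,3) by unfold_locales
  show ?thesis
    using AE_generic_nonzero
  proof eventually_elim
    case (elim b)
    obtain U S where "good_pair A lam m b U S"
      using good_pair_exists by blast
    then show ?case
      using good_pair_S_eq good_pair_unique_up_to_phases[OF elim] by blast
  qed
qed

end
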